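(* Let $n\geq 3$ and let $C_n^*$ be the bigraded complex described in the context. Let $\phi\colon C_n^*\to C_n^*$ be an $R$-linear chain map that is homogeneous of bigrading $(c_1,c_2)$ with $c_1>-2n$ and $c_2>-2n$, and suppose that the image of $\phi(\alpha_n^* )$ is a boundary in the complex $C_n^*\otimes_R \mathbb{F}[\mathcal{U}]/(\mathcal{U}^{n-1})$, where $\mathcal{V}$ acts on $\mathbb{F}[\mathcal{U}]/(\mathcal{U}^{n-1})$ as $1$. Then $\phi(\alpha_n^* )$ is divisible by $\mathcal{U}^{n-1}$.
   Context: Let $\mathbb{F}=\mathbb{Z}/2$ and $R=\mathbb{F}[\mathcal{U},\mathcal{V}]$, bigraded by $(\operatorname{gr}_{\mathcal{U}},\operatorname{gr}_{\mathcal{V}})$ with $\mathcal{U}$ of bigrading $(-2,0)$ and $\mathcal{V}$ of bigrading $(0,-2)$. For $n\geq 3$, $C_n^*$ is the free $R$-module with basis $\alpha^*_s$ ($1\leq s\leq 2n-1$); $\widetilde{\alpha}^*_s$ ($1\leq s\leq n-2$ and $n+1\leq s\leq 2n-2$); $b^{*,(s)}_{n-1}$ ($1\leq s\leq n-2$); $b^{*,(s)}_{n}$ ($1\leq s\leq 2n-2$); $b^{*,(s)}_{n+1}$ ($n+1\leq s\leq 2n-2$), with $R$-linear differential $\partial$ given by $\partial\alpha^*_s=0$, $\partial\widetilde{\alpha}^*_s=0$, and $\partial b^{*,(s)}_{n-1}=\mathcal{U}^{n(n-1)/2}\mathcal{V}^{n(n-1)/2}\alpha^*_s+\mathcal{V}^{n-s-1}\widetilde{\alpha}^*_s$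 for $1\leq s\leq n-2$; $\partial b^{*,(s)}_{n}=\mathcal{U}^{n(n+1)/2-s}\mathcal{V}^{n(n+1)/2}\alpha^*_{s+1}+\mathcal{U}^{n}\widetilde{\alpha}^*_s$ for $1\leq s\leq n-2$; $\partial b^{*,(s)}_{n}=\mathcal{U}^{n(n+1)/2}\mathcal{V}^{n(n-1)/2-n+s+1}\alpha^*_s+\mathcal{U}^{n(n+1)/2-s}\mathcal{V}^{n(n+1)/2}\alpha^*_{s+1}$ for $n-1\leq s\leq n$; $\partial b^{*,(s)}_{n}=\mathcal{U}^{n(n+1)/2}\mathcal{V}^{n(n-1)/2-n+s+1}\alpha^*_s+\mathcal{V}^{n}\widetilde{\alpha}^*_s$ for $n+1\leq s\leq 2n-2$; $\partial b^{*,(s)}_{n+1}=\mathcal{U}^{n(n-1)/2}\mathcal{V}^{n(n-1)/2}\alpha^*_{s+1}+\mathcal{U}^{s-n}\widetilde{\alpha}^*_s$ for $n+1\leq s\leq 2n-2$. The basis elements are assigned bigradings so that $\partial$ is homogeneous of bigrading $(-1,-1)$ (unique up to an overall shift; any such choice is fixed). A map is homogeneous of bigrading $(c_1,c_2)$ if it sends homogeneous elements of bigrading $(a,b)$ to homogeneous elements of bigrading $(a+c_1,b+c_2)$. *)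

theory Defs
  imports Main
begin

text \<open>Generators of C_n^*: A s = alpha_s, At s = tilde alpha_s,
  B1 s = b_{n-1}^{(s)}, B0 s = b_n^{(s)}, B2 s = b_{n+1}^{(s)}.\<close>
datatype gen = A nat | At nat | B1 nat | B0 nat | B2 nat

fun valid_gen :: "nat \<Rightarrow> gen \<Rightarrow> bool" where
  "valid_gen n (A s) = (1 \<le> s \<and> s \<le> 2*n - 1)"
| "valid_gen n (At s) = ((1 \<le> s \<and> s \<le> n - 2) \<or> (n + 1 \<le> s \<and> s \<le> 2*n - 2))"
| "valid_gen n (B1 s) = (1 \<le> s \<and> s \<le> n - 2)"
| "valid_gen n (B0 s) = (1 \<le> s \<and> s \<le> 2*n - 2)"
| "valid_gen n (B2 s) = (n + 1 \<le> s \<and> s \<le> 2*n - 2)"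

text \<open>An element of C_n^* (a free R-module, R = F_2[U,V]) is an F_2-linear
  combination of monomials U^i V^j g, encoded as the finite set of triples (g,i,j)
  with coefficient 1.\<close>
type_synonym elem = "(gen \<times> nat \<times> nat) set"

definition Cn :: "nat \<Rightarrow> elem set" where
  "Cn n = {x. finite x \<and> (\<forall>(g,i,j)\<in>x. valid_gen n g)}"

definition add :: "elem \<Rightarrow> elem \<Rightarrow> elem" where
  "add x y = (x - y) \<union> (y - x)"

definition mulU :: "nat \<Rightarrow> elem \<Rightarrow> elem" where
  "mulU k x = (\<lambda>(g,i,j). (g, i + k, j)) ` x"

definition mulV :: "nat \<Rightarrow> elem \<Rightarrow> elem" where
  "mulV k x = (\<lambda>(g,i,j). (g, i, j + k)) ` x"

text \<open>Differential on generators: set of monomials (g', a, b) meaning U^a V^b g'.\<close>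
fun dgen :: "nat \<Rightarrow> gen \<Rightarrow> (gen \<times> nat \<times> nat) set" where
  "dgen n (A s) = {}"
| "dgen n (At s) = {}"
| "dgen n (B1 s) =
     (if 1 \<le> s \<and> s \<le> n - 2
      then {(A s, n*(n-1) div 2, n*(n-1) div 2), (At s, 0, n - s - 1)} else {})"
| "dgen n (B0 s) =
     (if 1 \<le> s \<and> s \<le> n - 2
      then {(A (s+1), n*(n+1) div 2 - s, n*(n+1) div 2), (At s, n, 0)}
      else if n - 1 \<le> s \<and> s \<le> n
      then {(A s, n*(n+1) div 2, n*(n-1) div 2 - n + s + 1),
            (A (s+1), n*(n+1) div 2 - s, n*(n+1) div 2)}
      else if n + 1 \<le> s \<and> s \<le> 2*n - 2
      then {(A s, n*(n+1) div 2, n*(n-1) div 2 - n + s + 1), (At s, 0, n)}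
      else {})"
| "dgen n (B2 s) =
     (if n + 1 \<le> s \<and> s \<le> 2*n - 2
      then {(A (s+1), n*(n-1) div 2, n*(n-1) div 2), (At s, s - n, 0)} else {})"

definition dC :: "nat \<Rightarrow> elem \<Rightarrow> elem" where
  "dC n x = {(g', i', j'). odd (card {(g,i,j) \<in> x.
       \<exists>a b. (g', a, b) \<in> dgen n g \<and> i' = i + a \<and> j' = j + b})}"

text \<open>Admissible bigradings: an assignment of (gr_U, gr_V) to generators such that
  the differential is homogeneous of bigrading (-1,-1); U^i V^j g has bigrading
  gr g + (-2i,-2j).\<close>
definition grading_ok :: "nat \<Rightarrow> (gen \<Rightarrow> int \<times> int) \<Rightarrow> bool" where
  "grading_ok n gr = (\<forall>g. valid_gen n g \<longrightarrow> (\<forall>(g',a,b)\<in>dgen n g.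
       fst (gr g') - 2 * int a = fst (gr g) - 1 \<and>
       snd (gr g') - 2 * int b = snd (gr g) - 1))"

definition homog :: "(gen \<Rightarrow> int \<times> int) \<Rightarrow> int \<Rightarrow> int \<Rightarrow> elem \<Rightarrow> bool" where
  "homog gr a b x = (\<forall>(g,i,j)\<in>x. fst (gr g) - 2 * int i = a \<and> snd (gr g) - 2 * int j = b)"

definition R_linear_chain_map :: "nat \<Rightarrow> (elem \<Rightarrow> elem) \<Rightarrow> bool" where
  "R_linear_chain_map n phi =
     ((\<forall>x\<in>Cn n. phi x \<in> Cn n) \<and>
      (\<forall>x\<in>Cn n. \<forall>y\<in>Cn n. phi (add x y) = add (phi x) (phi y)) \<and>
      (\<forall>x\<in>Cn n. phi (mulU 1 x) = mulU 1 (phi x)) \<and>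
      (\<forall>x\<in>Cn n. phi (mulV 1 x) = mulV 1 (phi x)) \<and>
      (\<forall>x\<in>Cn n. phi (dC n x) = dC n (phi x)))"

definition homogeneous_map ::
  "nat \<Rightarrow> (gen \<Rightarrow> int \<times> int) \<Rightarrow> int \<Rightarrow> int \<Rightarrow> (elem \<Rightarrow> elem) \<Rightarrow> bool" where
  "homogeneous_map n gr c1 c2 phi =
     (\<forall>x\<in>Cn n. \<forall>a b. homog gr a b x \<longrightarrow> homog gr (a + c1) (b + c2) (phi x))"

text \<open>The complex C_n^* \<otimes>_R F[U]/(U^{n-1}) with V acting as 1: F-linear
  combinations of U^i g with i < n-1, encoded as finite sets of pairs (g,i).\<close>
type_synonym qelem = "(gen \<times> nat) set"

definition Qn :: "nat \<Rightarrow> qelem set" where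
  "Qn n = {y. finite y \<and> (\<forall>(g,i)\<in>y. valid_gen n g \<and> i < n - 1)}"

definition dQ :: "nat \<Rightarrow> qelem \<Rightarrow> qelem" where
  "dQ n y = {(g', i'). i' < n - 1 \<and> odd (card {(g,i) \<in> y.
       \<exists>a b. (g', a, b) \<in> dgen n g \<and> i' = i + a})}"

text \<open>The map x \<mapsto> x \<otimes> 1.\<close>
definition red :: "nat \<Rightarrow> elem \<Rightarrow> qelem" where
  "red n x = {(g, i). i < n - 1 \<and> odd (card {j. (g, i, j) \<in> x})}"

definition alpha :: "nat \<Rightarrow> elem" where
  "alpha s = {(A s, 0, 0)}"

end

theory Submission
  imports Defs
begin

(* Since d has bidegree (-1,-1), each d b = U^a V^b g1 + U^a' V^b' g2 ties the bigradings
   of b, g1 and g2 together.  Chasing these relations along the alpha_s shows that every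
   generator other than alpha_n lies at least 2n below alpha_n in gr_U or in gr_V.  As
   c1, c2 > -2n, the homogeneous element phi(alpha_n) is therefore 0 or a single monomial
   U^i V^j alpha_n.  Every differential hitting alpha_n carries a factor U^(n-1), so for
   i < n - 1 the class U^i alpha_n survives mod U^(n-1) and is not a boundary there. *)

lemma triangular_Suc_eq: "n * (n + 1) div 2 = n * (n - 1) div 2 + (n::nat)"
proof -
  have "n * (n + 1) = n * (n - 1) + 2 * n"
    by (cases n) (simp_all add: algebra_simps)
  then show ?thesis by simp
qed

lemma le_triangular:
  assumes "3 \<le> (n::nat)"
  shows "n \<le> n * (n - 1) div 2"
proof -
  have "n * 2 \<le> n * (n - 1)"
    using assms by (intro mult_le_mono2) simp
  then show ?thesis by linarith
qed

lemma gr_dgen_source: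
  assumes "grading_ok n gr" "valid_gen n g" "(g', a, b) \<in> dgen n g"
  shows "fst (gr g) = fst (gr g') + 1 - 2 * int a"
    and "snd (gr g) = snd (gr g') + 1 - 2 * int b"
  using assms unfolding grading_ok_def by fastforce+

lemma gr_dgen_siblings:
  assumes "grading_ok n gr" "valid_gen n g"
    and "(g1, a1, b1) \<in> dgen n g" "(g2, a2, b2) \<in> dgen n g"
  shows "fst (gr g1) - 2 * int a1 = fst (gr g2) - 2 * int a2"
    and "snd (gr g1) - 2 * int b1 = snd (gr g2) - 2 * int b2"
  using gr_dgen_source[OF assms(1,2,3)] gr_dgen_source[OF assms(1,2,4)] by linarith+

lemma dgen_A_imp_U_exp_ge:
  assumes "3 \<le> n" "(A n, a, b) \<in> dgen n g"
  shows "n - 1 \<le> a"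
  using assms triangular_Suc_eq[of n] le_triangular[OF assms(1)]
  by (cases g; (auto split: if_splits; linarith))

locale admissible_grading =
  fixes n :: nat and gr :: "gen \<Rightarrow> int \<times> int"
  assumes n_ge_3: "3 \<le> n" and grading_ok: "grading_ok n gr"
begin

lemmas gr_source = gr_dgen_source[OF grading_ok]
lemmas gr_siblings = gr_dgen_siblings[OF grading_ok]
lemmas triangular = triangular_Suc_eq[of n] le_triangular[OF n_ge_3]

lemma snd_gr_A_step:
  assumes "1 \<le> s" "s \<le> n - 2"
  shows "snd (gr (A s)) \<le> snd (gr (A (Suc s)))"
proof -
  have B: "valid_gen n (B1 s)" "valid_gen n (B0 s)"
    using assms by auto
  have "(A s, n*(n-1) div 2, n*(n-1) div 2) \<in> dgen n (B1 s)"
    and "(At s, 0, n - s - 1) \<in> dgen n (B1 s)"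
    and "(A (Suc s), n*(n+1) div 2 - s, n*(n+1) div 2) \<in> dgen n (B0 s)"
    and "(At s, n, 0) \<in> dgen n (B0 s)"
    using assms by auto
  with B have "snd (gr (A s)) - 2 * int (n*(n-1) div 2) = snd (gr (At s)) - 2 * int (n - s - 1)"
    and "snd (gr (A (Suc s))) - 2 * int (n*(n+1) div 2) = snd (gr (At s)) - 2 * int 0"
    using gr_siblings(2) by blast+
  then show ?thesis
    using assms triangular by linarith
qed

lemma fst_gr_A_step:
  assumes "n + 1 \<le> s" "s \<le> 2*n - 2"
  shows "fst (gr (A (Suc s))) \<le> fst (gr (A s))"
proof -
  have B: "valid_gen n (B2 s)" "valid_gen n (B0 s)"
    using assms by auto
  have "(A (Suc s), n*(n-1) div 2, n*(n-1) div 2) \<in> dgen n (B2 s)"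
    and "(At s, s - n, 0) \<in> dgen n (B2 s)"
    and "(A s, n*(n+1) div 2, n*(n-1) div 2 - n + s + 1) \<in> dgen n (B0 s)"
    and "(At s, 0, n) \<in> dgen n (B0 s)"
    using assms by auto
  with B have "fst (gr (A (Suc s))) - 2 * int (n*(n-1) div 2) = fst (gr (At s)) - 2 * int (s - n)"
    and "fst (gr (A s)) - 2 * int (n*(n+1) div 2) = fst (gr (At s)) - 2 * int 0"
    using gr_siblings(1) by blast+
  then show ?thesis
    using assms triangular by linarith
qed

lemma snd_gr_A_gap: "snd (gr (A (n - 1))) = snd (gr (A n)) - 2 * int n"
proof -
  have "valid_gen n (B0 (n - 1))"
    using n_ge_3 by auto
  moreover have "(A (n - 1), n*(n+1) div 2, n*(n-1) div 2) \<in> dgen n (B0 (n - 1))"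
    and "(A n, n*(n+1) div 2 - (n - 1), n*(n+1) div 2) \<in> dgen n (B0 (n - 1))"
    using n_ge_3 triangular by auto
  ultimately have "snd (gr (A (n - 1))) - 2 * int (n*(n-1) div 2)
      = snd (gr (A n)) - 2 * int (n*(n+1) div 2)"
    using gr_siblings(2) by blast
  then show ?thesis
    using triangular by linarith
qed

lemma fst_gr_A_gap: "fst (gr (A (Suc n))) = fst (gr (A n)) - 2 * int n"
proof -
  have "valid_gen n (B0 n)"
    using n_ge_3 by auto
  moreover have "(A n, n*(n+1) div 2, n*(n-1) div 2 + 1) \<in> dgen n (B0 n)"
    and "(A (Suc n), n*(n+1) div 2 - n, n*(n+1) div 2) \<in> dgen n (B0 n)"
    using n_ge_3 triangular by auto
  ultimately have "fst (gr (A n)) - 2 * int (n*(n+1) div 2)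
      = fst (gr (A (Suc n))) - 2 * int (n*(n+1) div 2 - n)"
    using gr_siblings(1) by blast
  then show ?thesis
    using triangular by linarith
qed

lemma snd_gr_A_below:
  assumes "1 \<le> s" "s < n"
  shows "snd (gr (A s)) \<le> snd (gr (A n)) - 2 * int n"
proof -
  have "s \<le> n - 1"
    using assms(2) by simp
  then show ?thesis
  proof (induction s rule: inc_induct)
    case base
    then show ?case using snd_gr_A_gap by simp
  next
    case (step m)
    have "snd (gr (A m)) \<le> snd (gr (A (Suc m)))"
      using step.hyps assms(1) by (intro snd_gr_A_step) auto
    with step.IH show ?case by simp
  qed
qed

lemma fst_gr_A_below:
  assumes "n < s" "s \<le> 2*n - 1"
  shows "fst (gr (A s)) \<le> fst (gr (A n)) - 2 * int n"
proof -
  have "Suc n \<le> s"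
    using assms(1) by simp
  then show ?thesis
    using assms(2)
  proof (induction s rule: dec_induct)
    case base
    then show ?case using fst_gr_A_gap by simp
  next
    case (step m)
    have "fst (gr (A (Suc m))) \<le> fst (gr (A m))"
      using step.hyps step.prems by (intro fst_gr_A_step) auto
    with step.IH step.prems show ?case by simp
  qed
qed

lemma snd_gr_below_if_dgen_A:
  assumes "valid_gen n g" "(A t, a, b) \<in> dgen n g" "0 < b" "1 \<le> t" "t < n"
  shows "snd (gr g) \<le> snd (gr (A n)) - 2 * int n"
  using gr_source(2)[OF assms(1,2)] snd_gr_A_below[OF assms(4,5)] assms(3) by linarith

lemma fst_gr_below_if_dgen_A:
  assumes "valid_gen n g" "(A t, a, b) \<in> dgen n g" "0 < a" "n < t" "t \<le> 2*n - 1"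
  shows "fst (gr g) \<le> fst (gr (A n)) - 2 * int n"
  using gr_source(1)[OF assms(1,2)] fst_gr_A_below[OF assms(4,5)] assms(3) by linarith

lemma gr_gap_to_A_n:
  assumes "valid_gen n g" "g \<noteq> A n"
  shows "fst (gr g) \<le> fst (gr (A n)) - 2 * int n \<or> snd (gr g) \<le> snd (gr (A n)) - 2 * int n"
proof (cases g)
  case (A s)
  then show ?thesis
    using assms snd_gr_A_below[of s] fst_gr_A_below[of s] by (cases "s < n") auto
next
  case (At s)
  show ?thesis
  proof (cases "s \<le> n - 2")
    case True
    have "valid_gen n (B1 s)" "(A s, n*(n-1) div 2, n*(n-1) div 2) \<in> dgen n (B1 s)"
      "(At s, 0, n - s - 1) \<in> dgen n (B1 s)"
      using assms At True by auto
    then have "snd (gr (At s)) - 2 * int (n - s - 1) = snd (gr (A s)) - 2 * int (n*(n-1) div 2)"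
      using gr_siblings(2) by blast
    moreover have "snd (gr (A s)) \<le> snd (gr (A n)) - 2 * int n"
      using assms At True n_ge_3 by (intro snd_gr_A_below) auto
    ultimately show ?thesis
      using At triangular by simp linarith
  next
    case False
    have "valid_gen n (B0 s)" "(A s, n*(n+1) div 2, n*(n-1) div 2 - n + s + 1) \<in> dgen n (B0 s)"
      "(At s, 0, n) \<in> dgen n (B0 s)"
      using assms At False by auto
    then have "fst (gr (At s)) - 2 * int 0 = fst (gr (A s)) - 2 * int (n*(n+1) div 2)"
      using gr_siblings(1) by blast
    moreover have "fst (gr (A s)) \<le> fst (gr (A n)) - 2 * int n"
      using assms At False by (intro fst_gr_A_below) auto
    ultimately show ?thesis
      using At by simp
  qed
next
  case (B1 s)
  then have "s < n"
    using assms by auto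
  with B1 show ?thesis
    using assms n_ge_3 triangular
      snd_gr_below_if_dgen_A[of g s "n*(n-1) div 2" "n*(n-1) div 2"] by auto
next
  case (B0 s)
  consider "s \<le> n - 2" | "s = n - 1" | "s = n" | "n < s"
    by linarith
  then show ?thesis
  proof cases
    case 1
    then show ?thesis
      using assms B0 n_ge_3 triangular
        snd_gr_below_if_dgen_A[of g "Suc s" "n*(n+1) div 2 - s" "n*(n+1) div 2"] by auto
  next
    case 2
    then show ?thesis
      using assms B0 n_ge_3 triangular
        snd_gr_below_if_dgen_A[of g "n - 1" "n*(n+1) div 2" "n*(n-1) div 2"] by auto
  next
    case 3
    then show ?thesis
      using assms B0 n_ge_3 triangular
        fst_gr_below_if_dgen_A[of g "Suc n" "n*(n+1) div 2 - n" "n*(n+1) div 2"] by auto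
  next
    case 4
    then show ?thesis
      using assms B0 n_ge_3 triangular
        fst_gr_below_if_dgen_A[of g s "n*(n+1) div 2" "n*(n-1) div 2 - n + s + 1"] by auto
  qed
next
  case (B2 s)
  then show ?thesis
    using assms n_ge_3 triangular
      fst_gr_below_if_dgen_A[of g "Suc s" "n*(n-1) div 2" "n*(n-1) div 2"] by auto
qed

lemma homog_Cn_subset_monomial:
  assumes "x \<in> Cn n" "homog gr (fst (gr (A n)) + c1) (snd (gr (A n)) + c2) x"
    and "c1 > - 2 * int n" "c2 > - 2 * int n"
  obtains i j where "x \<subseteq> {(A n, i, j)}"
proof -
  have monomial: "g = A n \<and> 2 * int i = - c1 \<and> 2 * int j = - c2" if "(g, i, j) \<in> x" for g i j
  proof -
    have "valid_gen n g"
      using assms(1) that unfolding Cn_def by blast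
    moreover have "fst (gr g) - 2 * int i = fst (gr (A n)) + c1"
      and "snd (gr g) - 2 * int j = snd (gr (A n)) + c2"
      using assms(2) that unfolding homog_def by fastforce+
    ultimately show ?thesis
      using gr_gap_to_A_n[of g] assms(3,4) by (cases "g = A n") auto
  qed
  show thesis
  proof (cases "x = {}")
    case True
    then show thesis using that by blast
  next
    case False
    then obtain g i j where gij: "(g, i, j) \<in> x" by auto
    have "x \<subseteq> {(A n, i, j)}"
    proof
      fix m
      assume "m \<in> x"
      moreover obtain g' i' j' where "m = (g', i', j')"
        by (cases m)
      ultimately show "m \<in> {(A n, i, j)}"
        using monomial[of g' i' j'] monomial[OF gij] by simp
    qed
    then show thesis using that by blast
  qed
qed

end

lemma A_n_not_in_dQ:
  assumes "3 \<le> n" "i < n - 1"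
  shows "(A n, i) \<notin> dQ n y"
proof -
  have no_preimage: "{(g, i0) \<in> y. \<exists>a b. (A n, a, b) \<in> dgen n g \<and> i = i0 + a} = {}"
    using dgen_A_imp_U_exp_ge[OF assms(1)] assms(2) by fastforce
  show ?thesis
    unfolding dQ_def mem_Collect_eq case_prod_conv no_preimage by simp
qed

lemma red_monomial: "i < n - 1 \<Longrightarrow> (g, i) \<in> red n {(g, i, j)}"
  unfolding red_def by simp

lemma mulU_monomial: "mulU k {(g, i, j)} = {(g, i + k, j)}"
  unfolding mulU_def by simp

lemma U_divisible_if_red_boundary:
  assumes "3 \<le> n" "x \<subseteq> {(A n, i, j)}" "dQ n y = red n x"
  shows "\<exists>z\<in>Cn n. x = mulU (n - 1) z"
proof (cases "x = {}")
  case True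
  then show ?thesis by (auto simp: Cn_def mulU_def)
next
  case False
  with assms(2) have x: "x = {(A n, i, j)}"
    by blast
  have "n - 1 \<le> i"
  proof (rule ccontr)
    assume "\<not> n - 1 \<le> i"
    then have "(A n, i) \<in> dQ n y"
      using assms(3) x red_monomial by simp
    with \<open>\<not> n - 1 \<le> i\<close> show False
      using A_n_not_in_dQ[OF assms(1)] by simp
  qed
  then have "x = mulU (n - 1) {(A n, i - (n - 1), j)}"
    using x by (simp add: mulU_monomial)
  moreover have "{(A n, i - (n - 1), j)} \<in> Cn n"
    using assms(1) by (simp add: Cn_def)
  ultimately show ?thesis by blast
qed

theorem lemma2p10:
  fixes n :: nat and gr :: "gen \<Rightarrow> int \<times> int" and phi :: "elem \<Rightarrow> elem"
    and c1 c2 :: int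
  assumes "n \<ge> 3"
    and "grading_ok n gr"
    and "R_linear_chain_map n phi"
    and "homogeneous_map n gr c1 c2 phi"
    and "c1 > - 2 * int n" and "c2 > - 2 * int n"
    and "\<exists>y\<in>Qn n. dQ n y = red n (phi (alpha n))"
  shows "\<exists>z\<in>Cn n. phi (alpha n) = mulU (n - 1) z"
proof -
  interpret admissible_grading n gr
    using assms(1,2) by unfold_locales
  have alpha_Cn: "alpha n \<in> Cn n"
    using assms(1) by (simp add: Cn_def alpha_def)
  then have "phi (alpha n) \<in> Cn n"
    using assms(3) unfolding R_linear_chain_map_def by blast
  moreover have "homog gr (fst (gr (A n)) + c1) (snd (gr (A n)) + c2) (phi (alpha n))"
    using assms(4) alpha_Cn unfolding homogeneous_map_def by (simp add: homog_def alpha_def)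
  ultimately obtain i j where "phi (alpha n) \<subseteq> {(A n, i, j)}"
    using homog_Cn_subset_monomial assms(5,6) by blast
  then show ?thesis
    using U_divisible_if_red_boundary assms(1,7) by blast
qed

end
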